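(* Let $G=(V,E)$ be a directed graph, $s\neq t$ vertices and $k\ge 5$ an integer, and let $e(u,v)$ be an undetermined edge. Then $e(u,v)$ is an edge of $SPG_k(s,t)$ if and only if there exist an integer $l$ and vertices $v_2,v_3,\dots,v_{l-2}$ forming a simple path $q^*$ in $G$ of length $l-4\le k-4$ having $e(u,v)$ as one of its edges, such that (1) $v_2\in D$ and $v_{l-2}\in A$; and (2) there exist $v_1\in In_D(v_2)$ and $v_{l-1}\in Out_A(v_{l-2})$ such that the vertices $s,v_1,v_2,\dots,v_{l-1},t$ are pairwise distinct.
   Context: A path from $x$ to $y$ in $G$ is a vertex sequence $x=v_0,\dots,v_m=y$ with $(v_{i-1},v_i)\in E$; its length is $m$ and $V(p)$, $E(p)$ are its vertex and edge sets. A simple path has no repeated vertex. $SPG_k(s,t)$ is the subgraph of $G$ formed by the union of vertex sets and edge sets of all simple paths from $s$ to $t$ of length at most $k$. For a vertex $u$ and integer $l\ge 0$, $EV^*_l(s,u)$ exists iff there is at least one simple path from $s$ to $u$ of length at most $l$ not containing $t$, and then $EV^*_l(s,u)$ is the intersection of $V(p)$ over all such paths. Symmetrically, $EV^*_l(v,t)$ exists iff there is at least one simple path from $v$ to $t$ of length at most $l$ not containing $s$, and then it is the intersection of $V(p)$ over all such paths. The upper-bound graph $SPG^u_k(s,t)$ is the subgraph of $G$ whose edges are exactly those $e(u,v)\in E$ for which there exist integers $k_f,k_b\ge 0$ with $EV^*_{k_f}(s,u)$ and $EV^*_{k_b}(v,t)$ existing, $k_f+1+k_b\le k$, and $EV^*_{k_f}(s,u)\cap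 EV^*_{k_b}(v,t)=\emptyset$. An edge $e(u,v)\in E$ is definite if one of: (a) $u=s$ and $EV^*_{k-1}(v,t)$ exists; (b) $v=t$ and $EV^*_{k-1}(s,u)$ exists; (c) $EV^*_1(s,u)$ and $EV^*_{k-2}(v,t)$ exist and $u\notin EV^*_{k-2}(v,t)$; (d) $EV^*_1(v,t)$ and $EV^*_{k-2}(s,u)$ exist and $v\notin EV^*_{k-2}(s,u)$. An undetermined edge is an edge of $SPG^u_k(s,t)$ that is not definite. The departure set $D$ consists of vertices $w$ having an in-neighbour $x$ such that $x,w,s,t$ are pairwise distinct and $e(s,x),e(x,w)$ are edges of $SPG^u_k(s,t)$; for $w\in D$, $In_D(w)$ is the set of all such $x$. The arrival set $A$ consists of vertices $w$ having an out-neighbour $y$ such that $w,y,s,t$ are pairwise distinct and $e(w,y),e(y,t)$ are edges of $SPG^u_k(s,t)$; for $w\in A$, $Out_A(w)$ is the set of all such $y$. *)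

theory Defs
  imports Main
begin

fun walk :: "('a \<times> 'a) set \<Rightarrow> 'a list \<Rightarrow> bool" where
  "walk E [] = False"
| "walk E [x] = True"
| "walk E (x # y # ys) = ((x, y) \<in> E \<and> walk E (y # ys))"

definition is_path :: "('a \<times> 'a) set \<Rightarrow> 'a list \<Rightarrow> 'a \<Rightarrow> 'a \<Rightarrow> bool" where
  "is_path E p x y \<longleftrightarrow> walk E p \<and> hd p = x \<and> last p = y"

definition plen :: "'a list \<Rightarrow> nat" where
  "plen p = length p - 1"

definition path_edges :: "'a list \<Rightarrow> ('a \<times> 'a) set" where
  "path_edges p = set (zip p (tl p))"

definition SPG_edges :: "('a \<times> 'a) set \<Rightarrow> 'a \<Rightarrow> 'a \<Rightarrow> nat \<Rightarrow> ('a \<times> 'a) set" where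
  "SPG_edges E s t k = \<Union> {path_edges p | p. is_path E p s t \<and> distinct p \<and> plen p \<le> k}"

definition EVf_ex :: "('a \<times> 'a) set \<Rightarrow> 'a \<Rightarrow> 'a \<Rightarrow> nat \<Rightarrow> 'a \<Rightarrow> bool" where
  "EVf_ex E s t l u \<longleftrightarrow> (\<exists>p. is_path E p s u \<and> distinct p \<and> plen p \<le> l \<and> t \<notin> set p)"

definition EVf :: "('a \<times> 'a) set \<Rightarrow> 'a \<Rightarrow> 'a \<Rightarrow> nat \<Rightarrow> 'a \<Rightarrow> 'a set" where
  "EVf E s t l u = \<Inter> {set p | p. is_path E p s u \<and> distinct p \<and> plen p \<le> l \<and> t \<notin> set p}"

definition EVb_ex :: "('a \<times> 'a) set \<Rightarrow> 'a \<Rightarrow> 'a \<Rightarrow> nat \<Rightarrow> 'a \<Rightarrow> bool" where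
  "EVb_ex E s t l v \<longleftrightarrow> (\<exists>p. is_path E p v t \<and> distinct p \<and> plen p \<le> l \<and> s \<notin> set p)"

definition EVb :: "('a \<times> 'a) set \<Rightarrow> 'a \<Rightarrow> 'a \<Rightarrow> nat \<Rightarrow> 'a \<Rightarrow> 'a set" where
  "EVb E s t l v = \<Inter> {set p | p. is_path E p v t \<and> distinct p \<and> plen p \<le> l \<and> s \<notin> set p}"

definition SPGu_edges :: "('a \<times> 'a) set \<Rightarrow> 'a \<Rightarrow> 'a \<Rightarrow> nat \<Rightarrow> ('a \<times> 'a) set" where
  "SPGu_edges E s t k = {(u, v) \<in> E. \<exists>kf kb. EVf_ex E s t kf u \<and> EVb_ex E s t kb v \<and>
       kf + 1 + kb \<le> k \<and> EVf E s t kf u \<inter> EVb E s t kb v = {}}"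

definition definite :: "('a \<times> 'a) set \<Rightarrow> 'a \<Rightarrow> 'a \<Rightarrow> nat \<Rightarrow> 'a \<Rightarrow> 'a \<Rightarrow> bool" where
  "definite E s t k u v \<longleftrightarrow> (u, v) \<in> E \<and>
     ((u = s \<and> EVb_ex E s t (k - 1) v)
    \<or> (v = t \<and> EVf_ex E s t (k - 1) u)
    \<or> (EVf_ex E s t 1 u \<and> EVb_ex E s t (k - 2) v \<and> u \<notin> EVb E s t (k - 2) v)
    \<or> (EVb_ex E s t 1 v \<and> EVf_ex E s t (k - 2) u \<and> v \<notin> EVf E s t (k - 2) u))"

definition undetermined :: "('a \<times> 'a) set \<Rightarrow> 'a \<Rightarrow> 'a \<Rightarrow> nat \<Rightarrow> 'a \<Rightarrow> 'a \<Rightarrow> bool" where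
  "undetermined E s t k u v \<longleftrightarrow> (u, v) \<in> SPGu_edges E s t k \<and> \<not> definite E s t k u v"

definition In_D :: "('a \<times> 'a) set \<Rightarrow> 'a \<Rightarrow> 'a \<Rightarrow> nat \<Rightarrow> 'a \<Rightarrow> 'a set" where
  "In_D E s t k w = {x. (x, w) \<in> E \<and> distinct [x, w, s, t] \<and>
       (s, x) \<in> SPGu_edges E s t k \<and> (x, w) \<in> SPGu_edges E s t k}"

definition Dep :: "('a \<times> 'a) set \<Rightarrow> 'a \<Rightarrow> 'a \<Rightarrow> nat \<Rightarrow> 'a set" where
  "Dep E s t k = {w. In_D E s t k w \<noteq> {}}"

definition Out_A :: "('a \<times> 'a) set \<Rightarrow> 'a \<Rightarrow> 'a \<Rightarrow> nat \<Rightarrow> 'a \<Rightarrow> 'a set" where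
  "Out_A E s t k w = {y. (w, y) \<in> E \<and> distinct [w, y, s, t] \<and>
       (w, y) \<in> SPGu_edges E s t k \<and> (y, t) \<in> SPGu_edges E s t k}"

definition Arr :: "('a \<times> 'a) set \<Rightarrow> 'a \<Rightarrow> 'a \<Rightarrow> nat \<Rightarrow> 'a set" where
  "Arr E s t k = {w. Out_A E s t k w \<noteq> {}}"

end

theory Submission
  imports Defs
begin

text \<open>An undetermined edge is neither the first two nor the last two edges of any simple
s-t path of length at most k through it: at those positions one of the clauses of definiteness
would be witnessed by the prefix or suffix of the path. Hence such a path has the shape
s, v1, q, v(l-1), t with the edge inside q, and its four outer edges lie in the upper-bound
graph, which contains every edge of a simple s-t path of length at most k. Conversely, the
conditions on q and its two attached vertices exhibit precisely such a path.\<close>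

lemma mem_path_edges_iff: "(a, b) \<in> path_edges p \<longleftrightarrow> (\<exists>xs ys. p = xs @ a # b # ys)"
proof (induction p)
  case Nil
  then show ?case by (simp add: path_edges_def)
next
  case (Cons x p)
  then show ?case
    by (cases p) (auto simp: path_edges_def Cons_eq_append_conv)
qed

lemma path_edges_append_Cons: "(a, b) \<in> path_edges (xs @ a # b # ys)"
  by (subst mem_path_edges_iff) blast

lemma path_edges_infix: "path_edges ys \<subseteq> path_edges (xs @ ys @ zs)"
proof (rule subrelI)
  fix a b
  assume "(a, b) \<in> path_edges ys"
  then obtain ys1 ys2 where "ys = ys1 @ a # b # ys2"
    using mem_path_edges_iff by metis
  then show "(a, b) \<in> path_edges (xs @ ys @ zs)"
    using path_edges_append_Cons[of a b "xs @ ys1" "ys2 @ zs"] by simp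
qed

lemma walk_append_iff:
  assumes "xs \<noteq> []" and "ys \<noteq> []"
  shows "walk E (xs @ ys) \<longleftrightarrow> walk E xs \<and> (last xs, hd ys) \<in> E \<and> walk E ys"
  using assms
proof (induction xs)
  case Nil
  then show ?case by simp
next
  case (Cons x xs)
  then show ?case by (cases xs; cases ys) auto
qed

lemma walk_infix: "walk E (xs @ ys @ zs) \<Longrightarrow> ys \<noteq> [] \<Longrightarrow> walk E ys"
  by (cases "xs = []"; cases "zs = []") (simp_all add: walk_append_iff)

lemma path_edges_subset_if_walk: "walk E p \<Longrightarrow> path_edges p \<subseteq> E"
  by (induction E p rule: walk.induct) (auto simp: path_edges_def)

lemma EVf_of_simple_path_prefix:
  assumes p: "is_path E (xs @ u # ys) s t" "distinct (xs @ u # ys)"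
    and "ys \<noteq> []" and "length xs \<le> l"
  shows "EVf_ex E s t l u" and "EVf E s t l u \<subseteq> set (xs @ [u])"
proof -
  have "walk E (xs @ [u])"
    using p(1) \<open>ys \<noteq> []\<close> walk_append_iff[of "xs @ [u]" ys E] by (simp add: is_path_def)
  then have "is_path E (xs @ [u]) s u"
    using p(1) by (cases xs) (simp_all add: is_path_def)
  moreover have "t \<notin> set (xs @ [u])"
    using p \<open>ys \<noteq> []\<close> by (auto simp: is_path_def)
  moreover have "distinct (xs @ [u])" "plen (xs @ [u]) \<le> l"
    using p(2) \<open>length xs \<le> l\<close> by (auto simp: plen_def)
  ultimately show "EVf_ex E s t l u" and "EVf E s t l u \<subseteq> set (xs @ [u])"
    unfolding EVf_ex_def EVf_def by blast+
qed

lemma EVb_of_simple_path_suffix: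
  assumes p: "is_path E (xs @ v # ys) s t" "distinct (xs @ v # ys)"
    and "xs \<noteq> []" and "length ys \<le> l"
  shows "EVb_ex E s t l v" and "EVb E s t l v \<subseteq> set (v # ys)"
proof -
  have "walk E (v # ys)"
    using p(1) \<open>xs \<noteq> []\<close> walk_append_iff[of xs "v # ys" E] by (simp add: is_path_def)
  then have "is_path E (v # ys) v t"
    using p(1) by (simp add: is_path_def)
  moreover have "s \<notin> set (v # ys)"
    using p \<open>xs \<noteq> []\<close> by (cases xs) (auto simp: is_path_def)
  moreover have "distinct (v # ys)" "plen (v # ys) \<le> l"
    using p(2) \<open>length ys \<le> l\<close> by (auto simp: plen_def)
  ultimately show "EVb_ex E s t l v" and "EVb E s t l v \<subseteq> set (v # ys)"
    unfolding EVb_ex_def EVb_def by blast+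
qed

lemma path_edges_subset_SPG_edges:
  "is_path E p s t \<Longrightarrow> distinct p \<Longrightarrow> plen p \<le> k \<Longrightarrow> path_edges p \<subseteq> SPG_edges E s t k"
  unfolding SPG_edges_def by (rule Union_upper) blast

lemma SPG_edges_subset_SPGu_edges: "SPG_edges E s t k \<subseteq> SPGu_edges E s t k"
proof (rule subrelI)
  fix a b
  assume "(a, b) \<in> SPG_edges E s t k"
  then obtain p where p: "is_path E p s t" "distinct p" "plen p \<le> k"
    and ab: "(a, b) \<in> path_edges p"
    unfolding SPG_edges_def by blast
  obtain xs ys where p_eq: "p = xs @ a # b # ys"
    using ab mem_path_edges_iff by metis
  have "(a, b) \<in> E"
    using ab p(1) path_edges_subset_if_walk by (auto simp: is_path_def)
  moreover have "EVf_ex E s t (length xs) a" "EVf E s t (length xs) a \<subseteq> set (xs @ [a])"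
    using EVf_of_simple_path_prefix[of E xs a "b # ys"] p p_eq by auto
  moreover have "EVb_ex E s t (length ys) b" "EVb E s t (length ys) b \<subseteq> set (b # ys)"
    using EVb_of_simple_path_suffix[of E "xs @ [a]" b ys] p p_eq by auto
  moreover have "set (xs @ [a]) \<inter> set (b # ys) = {}" "length xs + 1 + length ys \<le> k"
    using p(2,3) p_eq by (auto simp: plen_def)
  ultimately show "(a, b) \<in> SPGu_edges E s t k"
    unfolding SPGu_edges_def by blast
qed

lemma undetermined_edge_far_from_source:
  assumes "\<not> definite E s t k u v"
    and p: "is_path E (xs @ u # v # ys) s t" "distinct (xs @ u # v # ys)"
      "plen (xs @ u # v # ys) \<le> k"
  shows "2 \<le> length xs"
proof (rule ccontr)
  have uv: "(u, v) \<in> E"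
    using p(1) path_edges_subset_if_walk mem_path_edges_iff by (fastforce simp: is_path_def)
  have len: "length xs + length ys + 1 \<le> k"
    using p(3) by (simp add: plen_def)
  assume "\<not> 2 \<le> length xs"
  then consider "xs = []" | x where "xs = [x]"
    by (cases xs; cases "tl xs") auto
  then show False
  proof cases
    case 1
    then have "u = s"
      using p(1) by (simp add: is_path_def)
    moreover have "EVb_ex E s t (k - 1) v"
      using EVb_of_simple_path_suffix[of E "[u]" v ys] p 1 len by auto
    ultimately show False
      using assms(1) uv by (simp add: definite_def)
  next
    case 2
    have "EVf_ex E s t 1 u"
      using EVf_of_simple_path_prefix[of E xs u "v # ys"] p 2 by auto
    moreover have "EVb_ex E s t (k - 2) v" "EVb E s t (k - 2) v \<subseteq> set (v # ys)"
      using EVb_of_simple_path_suffix[of E "xs @ [u]" v ys] p 2 len by auto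
    moreover have "u \<notin> set (v # ys)"
      using p(2) by simp
    ultimately show False
      using assms(1) uv by (auto simp: definite_def)
  qed
qed

lemma undetermined_edge_far_from_target:
  assumes "\<not> definite E s t k u v"
    and p: "is_path E (xs @ u # v # ys) s t" "distinct (xs @ u # v # ys)"
      "plen (xs @ u # v # ys) \<le> k"
  shows "2 \<le> length ys"
proof (rule ccontr)
  have uv: "(u, v) \<in> E"
    using p(1) path_edges_subset_if_walk mem_path_edges_iff by (fastforce simp: is_path_def)
  have len: "length xs + length ys + 1 \<le> k"
    using p(3) by (simp add: plen_def)
  assume "\<not> 2 \<le> length ys"
  then consider "ys = []" | y where "ys = [y]"
    by (cases ys; cases "tl ys") auto
  then show False
  proof cases
    case 1
    then have "v = t"
      using p(1) by (simp add: is_path_def)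
    moreover have "EVf_ex E s t (k - 1) u"
      using EVf_of_simple_path_prefix[of E xs u "[v]"] p 1 len by auto
    ultimately show False
      using assms(1) uv by (simp add: definite_def)
  next
    case 2
    have "EVb_ex E s t 1 v"
      using EVb_of_simple_path_suffix[of E "xs @ [u]" v ys] p 2 by auto
    moreover have "EVf_ex E s t (k - 2) u" "EVf E s t (k - 2) u \<subseteq> set (xs @ [u])"
      using EVf_of_simple_path_prefix[of E xs u "v # ys"] p 2 len by auto
    moreover have "v \<notin> set (xs @ [u])"
      using p(2) by auto
    ultimately show False
      using assms(1) uv by (auto simp: definite_def)
  qed
qed

lemma undetermined_edge_splits_simple_path:
  assumes "\<not> definite E s t k u v"
    and p: "is_path E p s t" "distinct p" "plen p \<le> k" "(u, v) \<in> path_edges p"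
  obtains v1 qs vl1 where "p = [s, v1] @ qs @ [vl1, t]" and "(u, v) \<in> path_edges qs"
proof -
  obtain xs ys where p_eq: "p = xs @ u # v # ys"
    using p(4) mem_path_edges_iff by metis
  have "2 \<le> length xs" "2 \<le> length ys"
    using undetermined_edge_far_from_source[OF assms(1) p(1-3)[unfolded p_eq]]
      undetermined_edge_far_from_target[OF assms(1) p(1-3)[unfolded p_eq]] by auto
  obtain x0 v1 xs' where "xs = x0 # v1 # xs'"
    using \<open>2 \<le> length xs\<close> by (metis Suc_le_length_iff numeral_2_eq_2)
  moreover obtain y0 vl1 ys' where "ys = ys' @ [vl1, y0]"
    using \<open>2 \<le> length ys\<close>
    by (cases ys rule: rev_cases; cases "butlast ys" rule: rev_cases) auto
  moreover have "hd p = s" "last p = t"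
    using p(1) by (auto simp: is_path_def)
  ultimately have "p = [s, v1] @ (xs' @ u # v # ys') @ [vl1, t]"
    using p_eq by simp
  moreover have "(u, v) \<in> path_edges (xs' @ u # v # ys')"
    by (rule path_edges_append_Cons)
  ultimately show thesis
    using that by blast
qed

lemma simple_path_outer_vertices_in_In_D_Out_A:
  assumes "is_path E p s t" "distinct p" "plen p \<le> k"
    and p_eq: "p = [s, v1] @ qs @ [vl1, t]" and "qs \<noteq> []"
  shows "v1 \<in> In_D E s t k (hd qs)" and "vl1 \<in> Out_A E s t k (last qs)"
proof -
  have "path_edges p \<subseteq> SPGu_edges E s t k"
    using path_edges_subset_SPG_edges[OF assms(1-3)] SPG_edges_subset_SPGu_edges by (rule order_trans)
  moreover have "(s, v1) \<in> path_edges p" "(vl1, t) \<in> path_edges p"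
    using path_edges_append_Cons[of s v1 "[]"] path_edges_append_Cons[of vl1 t "s # v1 # qs" "[]"]
    by (simp_all add: p_eq)
  moreover have "(v1, hd qs) \<in> path_edges p"
    using path_edges_append_Cons[of v1 "hd qs" "[s]" "tl qs @ [vl1, t]"] \<open>qs \<noteq> []\<close>
    by (cases qs) (simp_all add: p_eq)
  moreover have "(last qs, vl1) \<in> path_edges p"
    using path_edges_append_Cons[of "last qs" vl1 "s # v1 # butlast qs" "[t]"] \<open>qs \<noteq> []\<close>
    by (cases qs rule: rev_cases) (simp_all add: p_eq)
  moreover have "SPGu_edges E s t k \<subseteq> E"
    unfolding SPGu_edges_def by blast
  moreover have "distinct [v1, hd qs, s, t]" "distinct [last qs, vl1, s, t]"
    using assms(2) p_eq \<open>qs \<noteq> []\<close> by auto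
  ultimately show "v1 \<in> In_D E s t k (hd qs)" and "vl1 \<in> Out_A E s t k (last qs)"
    unfolding In_D_def Out_A_def by blast+
qed

lemma path_through_In_D_Out_A:
  assumes "walk E qs" "qs \<noteq> []"
    and "v1 \<in> In_D E s t k (hd qs)" and "vl1 \<in> Out_A E s t k (last qs)"
  shows "is_path E ([s, v1] @ qs @ [vl1, t]) s t"
proof -
  have "(s, v1) \<in> E" "(v1, hd qs) \<in> E" "(last qs, vl1) \<in> E" "(vl1, t) \<in> E"
    using assms(3,4) unfolding In_D_def Out_A_def SPGu_edges_def by auto
  then have "walk E ([s, v1] @ qs @ [vl1, t])"
    using assms(1,2) walk_append_iff[of "[s, v1]" "qs @ [vl1, t]" E]
      walk_append_iff[of qs "[vl1, t]" E] by simp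
  then show ?thesis
    by (simp add: is_path_def)
qed

theorem theorem5p6:
  fixes E :: "('a \<times> 'a) set" and s t u v :: 'a and k :: nat
  assumes "s \<noteq> t" and "k \<ge> 5" and "undetermined E s t k u v"
  shows "(u, v) \<in> SPG_edges E s t k \<longleftrightarrow>
    (\<exists>(l::nat) qs. length qs + 3 = l \<and> walk E qs \<and> distinct qs \<and> l - 4 \<le> k - 4 \<and>
       (u, v) \<in> path_edges qs \<and>
       hd qs \<in> Dep E s t k \<and> last qs \<in> Arr E s t k \<and>
       (\<exists>v1 \<in> In_D E s t k (hd qs). \<exists>vl1 \<in> Out_A E s t k (last qs).
          distinct ([s, v1] @ qs @ [vl1, t])))"
    (is "_ \<longleftrightarrow> (\<exists>l qs. ?core l qs)")
proof
  assume "(u, v) \<in> SPG_edges E s t k"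
  then obtain p where p: "is_path E p s t" "distinct p" "plen p \<le> k" "(u, v) \<in> path_edges p"
    unfolding SPG_edges_def by blast
  moreover have "\<not> definite E s t k u v"
    using assms(3) by (simp add: undetermined_def)
  ultimately obtain v1 qs vl1 where p_eq: "p = [s, v1] @ qs @ [vl1, t]"
    and uv: "(u, v) \<in> path_edges qs"
    using undetermined_edge_splits_simple_path by metis
  have "qs \<noteq> []"
    using uv by (auto simp: path_edges_def)
  then have "walk E qs" "v1 \<in> In_D E s t k (hd qs)" "vl1 \<in> Out_A E s t k (last qs)"
    using p(1) walk_infix[of E "[s, v1]" qs "[vl1, t]"]
      simple_path_outer_vertices_in_In_D_Out_A[OF p(1-3) p_eq]
    by (auto simp: is_path_def p_eq)
  then have "?core (length qs + 3) qs"
    using p(2,3) uv unfolding p_eq Dep_def Arr_def plen_def by auto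
  then show "\<exists>l qs. ?core l qs" by blast
next
  assume "\<exists>l qs. ?core l qs"
  then obtain qs v1 vl1 where q: "walk E qs" "length qs + 3 - 4 \<le> k - 4"
    "(u, v) \<in> path_edges qs" "v1 \<in> In_D E s t k (hd qs)" "vl1 \<in> Out_A E s t k (last qs)"
    "distinct ([s, v1] @ qs @ [vl1, t])"
    by blast
  have "qs \<noteq> []"
    using q(3) by (auto simp: path_edges_def)
  let ?p = "[s, v1] @ qs @ [vl1, t]"
  have "is_path E ?p s t"
    using path_through_In_D_Out_A[OF q(1) \<open>qs \<noteq> []\<close> q(4,5)] .
  moreover have "plen ?p \<le> k"
    using q(2) assms(2) by (simp add: plen_def)
  moreover have "(u, v) \<in> path_edges ?p"
    using q(3) path_edges_infix by blast
  ultimately show "(u, v) \<in> SPG_edges E s t k"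
    using q(6) unfolding SPG_edges_def by blast
qed

end
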